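(* For every prime power $q$, all integers $n$, $r\le\lfloor n/2\rfloor$ and $0<\rho<r$, $$K_{\mathrm{C}}(q,n,r,\rho)\le\binom{n}{r}K_{\mathrm{R}}(q^{n-r},r,\rho).$$
   Context: $E_r(q,n)$ is the set of $r$-dimensional subspaces of $\mathrm{GF}(q)^n$ with injection distance $d_{\mathrm{I}}(U,V)=\dim(U+V)-\min\{\dim U,\dim V\}$; the covering radius of a nonempty $\mathcal{C}\subseteq E_r(q,n)$ is $\max_U\min_{C\in\mathcal{C}}d_{\mathrm{I}}(U,C)$, and $K_{\mathrm{C}}(q,n,r,\rho)$ is the minimum cardinality of a subset of $E_r(q,n)$ with covering radius at most $\rho$. The rank distance on $\mathrm{GF}(q)^{m\times N}$ is $d_{\mathrm{R}}({\bf C},{\bf D})=\mathrm{rk}({\bf C}-{\bf D})$; $K_{\mathrm{R}}(q^m,N,\rho)$ is the minimum cardinality of a set $\mathcal{C}\subseteq\mathrm{GF}(q)^{m\times N}$ such that every matrix in $\mathrm{GF}(q)^{m\times N}$ is within rank distance $\rho$ of some element of $\mathcal{C}$. *)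

theory Defs
  imports Complex_Main "HOL-Library.Function_Algebras"
begin

text \<open>Vectors of GF(q)^n are modelled as functions nat => 'a vanishing outside {0..<n},
  where 'a is an arbitrary finite field (so q = CARD('a) ranges over all prime powers).\<close>

definition fscale :: "'a::field \<Rightarrow> (nat \<Rightarrow> 'a) \<Rightarrow> (nat \<Rightarrow> 'a)" where
  "fscale c v = (\<lambda>i. c * v i)"

definition vecs :: "'a::field itself \<Rightarrow> nat \<Rightarrow> (nat \<Rightarrow> 'a) set" where
  "vecs T n = {v. \<forall>i\<ge>n. v i = 0}"

definition vdim :: "(nat \<Rightarrow> 'a::field) set \<Rightarrow> nat" where
  "vdim U = Vector_Spaces.vector_space.dim fscale U"

definition Grass :: "'a::field itself \<Rightarrow> nat \<Rightarrow> nat \<Rightarrow> (nat \<Rightarrow> 'a) set set" where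
  "Grass T n r = {U. U \<subseteq> vecs T n \<and> Modules.module.subspace fscale U \<and> vdim U = r}"

definition subsum :: "(nat \<Rightarrow> 'a::field) set \<Rightarrow> (nat \<Rightarrow> 'a) set \<Rightarrow> (nat \<Rightarrow> 'a) set" where
  "subsum U V = {u + v | u v. u \<in> U \<and> v \<in> V}"

definition dI :: "(nat \<Rightarrow> 'a::field) set \<Rightarrow> (nat \<Rightarrow> 'a) set \<Rightarrow> nat" where
  "dI U V = vdim (subsum U V) - min (vdim U) (vdim V)"

definition covering_radius_sub ::
  "'a::field itself \<Rightarrow> nat \<Rightarrow> nat \<Rightarrow> (nat \<Rightarrow> 'a) set set \<Rightarrow> nat" where
  "covering_radius_sub T n r C = Max ((\<lambda>U. Min ((\<lambda>c. dI U c) ` C)) ` Grass T n r)"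

definition K_C :: "'a::field itself \<Rightarrow> nat \<Rightarrow> nat \<Rightarrow> nat \<Rightarrow> nat" where
  "K_C T n r \<rho> = Inf {card C | C. C \<subseteq> Grass T n r \<and> C \<noteq> {} \<and>
      covering_radius_sub T n r C \<le> \<rho>}"

definition mats :: "'a::field itself \<Rightarrow> nat \<Rightarrow> nat \<Rightarrow> (nat \<Rightarrow> nat \<Rightarrow> 'a) set" where
  "mats T m N = {M. \<forall>i j. (m \<le> i \<or> N \<le> j) \<longrightarrow> M i j = 0}"

definition mrank :: "nat \<Rightarrow> (nat \<Rightarrow> nat \<Rightarrow> 'a::field) \<Rightarrow> nat" where
  "mrank N M = vdim ((\<lambda>j. \<lambda>i. M i j) ` {..<N})"

definition dR :: "nat \<Rightarrow> (nat \<Rightarrow> nat \<Rightarrow> 'a::field) \<Rightarrow> (nat \<Rightarrow> nat \<Rightarrow> 'a) \<Rightarrow> nat" where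
  "dR N C D = mrank N (C - D)"

definition K_R :: "'a::field itself \<Rightarrow> nat \<Rightarrow> nat \<Rightarrow> nat \<Rightarrow> nat" where
  "K_R T m N \<rho> = Inf {card C | C. C \<subseteq> mats T m N \<and>
      (\<forall>M\<in>mats T m N. \<exists>D\<in>C. dR N M D \<le> \<rho>)}"

end

theory Submission
  imports Defs
begin

text \<open>Every r-dimensional subspace U of GF(q)^n has an information set: r coordinates S on which
  the projection of U is bijective. Hence U is the row space of a generator matrix that is the
  identity on S and some (n-r) x r matrix A (transposed) on the other coordinates. Replacing A
  by the nearest codeword D of a rank-metric covering code of radius \<rho> gives a subspace V with
  V \<subseteq> U + (column space of A - D), so dim (U + V) - r \<le> rk (A - D) \<le> \<rho>. Ranging over all
  n choose r sets S and all codewords D yields the covering code.\<close>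

interpretation fv: vector_space "fscale :: 'a::field \<Rightarrow> (nat \<Rightarrow> 'a) \<Rightarrow> (nat \<Rightarrow> 'a)"
  by unfold_locales (auto simp: fscale_def fun_eq_iff algebra_simps)

lemma fscale_apply [simp]: "fscale c v i = c * v i"
  by (simp add: fscale_def)

lemma sum_fun_apply: "(sum f A) x = (\<Sum>a\<in>A. f a x)"
  by (induction A rule: infinite_finite_induct) auto

context vector_space
begin

lemma dim_Un_le_if_subset_span:
  assumes "finite U" "finite W" "V \<subseteq> span (U \<union> W)"
  shows "dim (U \<union> V) \<le> dim U + dim W"
proof -
  obtain BU where BU: "BU \<subseteq> U" "independent BU" "U \<subseteq> span BU" "card BU = dim U"
    by (rule basis_exists)
  obtain BW where BW: "BW \<subseteq> W" "independent BW" "W \<subseteq> span BW" "card BW = dim W"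
    by (rule basis_exists)
  have "U \<union> W \<subseteq> span (BU \<union> BW)"
    using BU(3) BW(3) span_mono[of BU "BU \<union> BW"] span_mono[of BW "BU \<union> BW"] by auto
  then have "span (U \<union> W) \<subseteq> span (BU \<union> BW)"
    by (rule span_minimal[OF _ subspace_span])
  then have "U \<union> V \<subseteq> span (BU \<union> BW)"
    using assms(3) \<open>U \<union> W \<subseteq> span (BU \<union> BW)\<close> by blast
  moreover have "finite (BU \<union> BW)"
    using assms(1,2) BU(1) BW(1) finite_subset by blast
  ultimately have "dim (U \<union> V) \<le> card (BU \<union> BW)"
    by (rule dim_le_card)
  also have "\<dots> \<le> dim U + dim W"
    using card_Un_le[of BU BW] BU(4) BW(4) by simp
  finally show ?thesis .
qed

lemma dim_linear_image_le:
  assumes "Vector_Spaces.linear scale scale f" "finite X"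
  shows "dim (f ` X) \<le> dim X"
proof -
  obtain B where B: "B \<subseteq> X" "independent B" "X \<subseteq> span B" "card B = dim X"
    by (rule basis_exists)
  have "f ` X \<subseteq> span (f ` B)"
    using module_hom.spans_image[OF assms(1)[unfolded linear_iff_module_hom] B(3)] .
  moreover have "finite B"
    using assms(2) B(1) finite_subset by blast
  ultimately have "dim (f ` X) \<le> card (f ` B)"
    by (intro dim_le_card) auto
  also have "\<dots> \<le> dim X"
    using card_image_le[OF \<open>finite B\<close>, of f] B(4) by simp
  finally show ?thesis .
qed

end

lemma finite_vecs: "finite (vecs TYPE('a::{finite,field}) n)"
proof -
  have "vecs TYPE('a) n = {f. \<forall>x. (x \<in> {..<n} \<longrightarrow> f x \<in> (UNIV::'a set)) \<and> (x \<notin> {..<n} \<longrightarrow> f x = 0)}"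
    by (auto simp: vecs_def)
  then show ?thesis using finite_set_of_finite_funs[of "{..<n}" "UNIV::'a set" 0] by simp
qed

lemma subspace_vecs: "fv.subspace (vecs TYPE('a::field) n)"
  by (auto simp: fv.subspace_def vecs_def)

lemma finite_Grass: "finite (Grass TYPE('a::{finite,field}) n r)"
  by (rule finite_subset[of _ "Pow (vecs TYPE('a) n)"]) (auto simp: Grass_def finite_vecs)

lemma subsum_eq_span_Un:
  assumes "fv.subspace U" "fv.subspace V"
  shows "subsum U V = fv.span (U \<union> V)"
  using assms unfolding subsum_def fv.span_Un by (simp add: fv.span_eq_iff[THEN iffD2])

definition unit_vec :: "nat \<Rightarrow> nat \<Rightarrow> 'a::field" where
  "unit_vec i = (\<lambda>j. if j = i then 1 else 0)"

lemma unit_vec_in_vecs: "i < n \<Longrightarrow> unit_vec i \<in> vecs TYPE('a::field) n"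
  by (simp add: unit_vec_def vecs_def)

lemma sum_unit_vec_expansion:
  assumes "finite I" "\<And>i. i \<notin> I \<Longrightarrow> w i = 0"
  shows "(\<Sum>i\<in>I. fscale (w i) (unit_vec i)) = w"
  using assms by (auto simp: fun_eq_iff sum_fun_apply unit_vec_def if_distrib cong: if_cong)

lemma dim_span_biorthogonal:
  fixes v :: "nat \<Rightarrow> nat \<Rightarrow> 'a::field"
  assumes v: "\<And>j k. j < r \<Longrightarrow> k < r \<Longrightarrow> v j (s k) = (if j = k then 1 else 0)"
  shows "fv.dim (fv.span (v ` {..<r})) = r"
proof -
  have inj: "inj_on v {..<r}"
  proof (rule inj_onI)
    fix j k assume j: "j \<in> {..<r}" and k: "k \<in> {..<r}" and "v j = v k"
    then have "v k (s j) = 1" using v[of j j] by simp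
    then show "j = k" using v[of k j] j k by (simp split: if_splits)
  qed
  have "fv.independent (v ` {..<r})"
  proof (rule fv.independent_if_scalars_zero)
    fix c :: "(nat \<Rightarrow> 'a) \<Rightarrow> 'a" and x
    assume sum0: "(\<Sum>y\<in>v ` {..<r}. fscale (c y) y) = 0" and "x \<in> v ` {..<r}"
    then obtain k where k: "k < r" "x = v k" by auto
    have "0 = (\<Sum>j<r. c (v j) * v j (s k))"
      using fun_cong[OF sum0, of "s k"] by (simp add: sum_fun_apply sum.reindex[OF inj])
    also have "\<dots> = (\<Sum>j<r. if j = k then c (v j) else 0)"
      by (rule sum.cong) (simp_all add: v k(1))
    also have "\<dots> = c x"
      using k by simp
    finally show "c x = 0" by simp
  qed simp
  then show ?thesis
    using fv.dim_span_eq_card_independent card_image[OF inj] card_lessThan by metis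
qed

lemma vecs_eq_span_unit_vecs: "vecs TYPE('a::field) n = fv.span (unit_vec ` {..<n})"
proof
  show "vecs TYPE('a) n \<subseteq> fv.span (unit_vec ` {..<n})"
  proof
    fix w :: "nat \<Rightarrow> 'a" assume "w \<in> vecs TYPE('a) n"
    then have "w = (\<Sum>i<n. fscale (w i) (unit_vec i))"
      by (intro sum_unit_vec_expansion[symmetric]) (auto simp: vecs_def)
    also have "\<dots> \<in> fv.span (unit_vec ` {..<n})"
      by (intro fv.span_sum fv.span_scale fv.span_base) auto
    finally show "w \<in> fv.span (unit_vec ` {..<n})" .
  qed
  show "fv.span (unit_vec ` {..<n}) \<subseteq> vecs TYPE('a) n"
    by (intro fv.span_minimal subspace_vecs) (auto intro: unit_vec_in_vecs)
qed

lemma dim_vecs: "fv.dim (vecs TYPE('a::field) n) = n"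
  unfolding vecs_eq_span_unit_vecs by (rule dim_span_biorthogonal[where s = id]) (simp add: unit_vec_def)

definition enum :: "nat set \<Rightarrow> nat \<Rightarrow> nat" where
  "enum S = (!) (sorted_list_of_set S)"

lemma bij_betw_enum: "finite S \<Longrightarrow> bij_betw (enum S) {..<card S} S"
  unfolding enum_def by (rule bij_betw_nth) auto

definition embed_coords :: "nat set \<Rightarrow> (nat \<Rightarrow> 'a::field) \<Rightarrow> (nat \<Rightarrow> 'a)" where
  "embed_coords T z = (\<Sum>k<card T. fscale (z k) (unit_vec (enum T k)))"

lemma linear_embed_coords: "Vector_Spaces.linear fscale fscale (embed_coords T)"
  unfolding Vector_Spaces.linear_iff embed_coords_def
  by (simp add: fv.vector_space_axioms fv.scale_left_distrib sum.distrib fv.scale_sum_right)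

lemma embed_coords_cong:
  "(\<And>k. k < card T \<Longrightarrow> z k = z' k) \<Longrightarrow> embed_coords T z = embed_coords T z'"
  unfolding embed_coords_def by (rule sum.cong) auto

lemma embed_coords_outside:
  assumes "finite T" "i \<notin> T"
  shows "embed_coords T z i = 0"
proof -
  have "i \<noteq> enum T k" if "k < card T" for k
    using bij_betwE[OF bij_betw_enum[OF assms(1)]] that assms(2) by blast
  then show ?thesis
    by (simp add: embed_coords_def sum_fun_apply unit_vec_def)
qed

lemma embed_coords_enum:
  assumes "finite T"
  shows "embed_coords T (\<lambda>k. w (enum T k)) = (\<Sum>i\<in>T. fscale (w i) (unit_vec i))"
  unfolding embed_coords_def
  using sum.reindex_bij_betw[OF bij_betw_enum[OF assms], of "\<lambda>i. fscale (w i) (unit_vec i)"] .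

lemma vecs_decompose:
  assumes "w \<in> vecs TYPE('a::field) n" "S \<subseteq> {..<n}"
  shows "w = (\<Sum>i\<in>S. fscale (w i) (unit_vec i)) + embed_coords ({..<n} - S) (\<lambda>k. w (enum ({..<n} - S) k))"
proof -
  have "w = (\<Sum>i<n. fscale (w i) (unit_vec i))"
    using assms(1) by (intro sum_unit_vec_expansion[symmetric]) (auto simp: vecs_def)
  also have "\<dots> = (\<Sum>i\<in>{..<n} - S. fscale (w i) (unit_vec i)) + (\<Sum>i\<in>S. fscale (w i) (unit_vec i))"
    by (rule sum.subset_diff[OF assms(2) finite_lessThan])
  also have "\<dots> = (\<Sum>i\<in>S. fscale (w i) (unit_vec i)) + embed_coords ({..<n} - S) (\<lambda>k. w (enum ({..<n} - S) k))"
    unfolding embed_coords_enum[OF finite_Diff[OF finite_lessThan]] by (rule add.commute)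
  finally show ?thesis .
qed

text \<open>Extend a basis of U by unit vectors to a basis of the whole space; the added unit vectors
  are indexed by the complement of the information set.\<close>

lemma Grass_information_set:
  assumes U: "U \<in> Grass TYPE('a::{finite,field}) n r"
  obtains S where "S \<subseteq> {..<n}" "card S = r" "\<And>i. i \<in> S \<Longrightarrow> \<exists>x\<in>U. \<forall>j\<in>S. x j = unit_vec i j"
proof -
  have Usub: "U \<subseteq> vecs TYPE('a) n" and Us: "fv.subspace U" and Ud: "fv.dim U = r"
    using U by (auto simp: Grass_def vdim_def)
  obtain B where B: "B \<subseteq> U" "fv.independent B" "U \<subseteq> fv.span B" "card B = r"
    using Ud by (metis fv.basis_exists)
  define E where "E = (unit_vec :: nat \<Rightarrow> nat \<Rightarrow> 'a) ` {..<n}"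
  obtain B' where B': "B \<subseteq> B'" "B' \<subseteq> B \<union> E" "fv.independent B'" "B \<union> E \<subseteq> fv.span B'"
    using fv.maximal_independent_subset_extend[of B "B \<union> E"] B(2) by blast
  have "B' \<subseteq> vecs TYPE('a) n"
    using B'(2) B(1) Usub by (auto simp: E_def intro: unit_vec_in_vecs)
  moreover have "vecs TYPE('a) n \<subseteq> fv.span B'"
    unfolding vecs_eq_span_unit_vecs using B'(4) by (intro fv.span_minimal) (auto simp: E_def)
  ultimately have "card B' = n"
    using fv.basis_card_eq_dim[OF _ _ B'(3)] dim_vecs by metis
  define T where "T = {i. i < n \<and> unit_vec i \<in> B' - B}"
  have eT: "unit_vec ` T = B' - B"
    using B'(2) by (auto simp: T_def E_def)
  have "finite B'"
    using \<open>B' \<subseteq> vecs TYPE('a) n\<close> finite_vecs finite_subset by blast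
  then have "card (B' - B) = n - r"
    using card_Diff_subset[OF finite_subset[OF B'(1)] B'(1)] \<open>card B' = n\<close> B(4) by simp
  moreover have "inj_on (unit_vec :: nat \<Rightarrow> nat \<Rightarrow> 'a) T"
    by (auto simp: inj_on_def unit_vec_def fun_eq_iff)
  ultimately have "card T = n - r"
    using card_image eT by metis
  have "r \<le> n"
    using card_mono[OF \<open>finite B'\<close> B'(1)] \<open>card B' = n\<close> B(4) by simp
  define S where "S = {..<n} - T"
  have "card S = r"
    unfolding S_def using \<open>card T = n - r\<close> \<open>r \<le> n\<close>
    by (subst card_Diff_subset) (auto simp: T_def)
  have "\<exists>x\<in>U. \<forall>j\<in>S. x j = unit_vec i j" if "i \<in> S" for i
  proof -
    have "unit_vec i \<in> fv.span (B \<union> (B' - B))"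
      using B'(1,4) that by (auto simp: S_def E_def Un_absorb1)
    then obtain x y where xy: "unit_vec i = x + y" "x \<in> fv.span B" "y \<in> fv.span (B' - B)"
      unfolding fv.span_Un by blast
    have "fv.span (B' - B) \<subseteq> {v. \<forall>j\<in>S. v j = 0}"
      unfolding eT[symmetric] by (intro fv.span_minimal) (auto simp: fv.subspace_def unit_vec_def S_def)
    then have "\<forall>j\<in>S. x j = unit_vec i j"
      using xy(1,3) by (auto simp: fun_eq_iff)
    moreover have "x \<in> U"
      using xy(2) fv.span_subspace[OF B(1,3) Us] by simp
    ultimately show ?thesis by blast
  qed
  then show thesis
    using that[of S] \<open>card S = r\<close> by (auto simp: S_def)
qed

text \<open>Row j of the generator matrix that is the identity on the coordinates S and D transposed
  on the coordinates {..<n} - S, both listed in increasing order.\<close>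

definition systematic_vec :: "nat \<Rightarrow> nat set \<Rightarrow> (nat \<Rightarrow> nat \<Rightarrow> 'a::field) \<Rightarrow> nat \<Rightarrow> (nat \<Rightarrow> 'a)" where
  "systematic_vec n S D j = unit_vec (enum S j) + embed_coords ({..<n} - S) (\<lambda>k. D k j)"

definition systematic_space :: "nat \<Rightarrow> nat \<Rightarrow> nat set \<Rightarrow> (nat \<Rightarrow> nat \<Rightarrow> 'a::field) \<Rightarrow> (nat \<Rightarrow> 'a) set" where
  "systematic_space n r S D = fv.span (systematic_vec n S D ` {..<r})"

lemma systematic_space_in_Grass:
  assumes S: "S \<subseteq> {..<n}" "card S = r"
  shows "systematic_space n r S (D :: nat \<Rightarrow> nat \<Rightarrow> 'a::field) \<in> Grass TYPE('a) n r"
proof -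
  have "finite S" using S(1) finite_subset by blast
  have enumS: "enum S k \<in> S" "enum S k = enum S j \<longleftrightarrow> k = j" if "k < r" "j < r" for j k
    using bij_betwE[OF bij_betw_enum[OF \<open>finite S\<close>]] bij_betw_imp_inj_on[OF bij_betw_enum[OF \<open>finite S\<close>]]
      that S(2) by (auto dest: inj_onD)
  have "systematic_vec n S D j (enum S k) = (if j = k then 1 else 0)" if "j < r" "k < r" for j k
    using enumS[OF that(2,1)] enumS(1)[OF that(2)]
    by (simp add: systematic_vec_def embed_coords_outside unit_vec_def)
  then have "fv.dim (systematic_space n r S D) = r"
    unfolding systematic_space_def by (rule dim_span_biorthogonal)
  moreover have "systematic_space n r S D \<subseteq> vecs TYPE('a) n"
  proof -
    have "embed_coords ({..<n} - S) z i = 0" if "n \<le> i" for z and i :: nat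
      using embed_coords_outside[of "{..<n} - S" i z] that by simp
    moreover have "enum S j < n" if "j < r" for j
      using enumS(1)[OF that that] S(1) by auto
    ultimately have "systematic_vec n S D j \<in> vecs TYPE('a) n" if "j < r" for j
      using that by (fastforce simp: systematic_vec_def vecs_def unit_vec_def)
    then show ?thesis
      unfolding systematic_space_def by (intro fv.span_minimal subspace_vecs) auto
  qed
  ultimately show ?thesis
    by (simp add: Grass_def vdim_def systematic_space_def)
qed

lemma dI_le_if_subset_span:
  assumes U: "U \<in> Grass TYPE('a::{finite,field}) n r" and V: "V \<in> Grass TYPE('a) n r"
    and "finite W" "V \<subseteq> fv.span (U \<union> W)"
  shows "dI U V \<le> fv.dim W"
proof -
  have "finite U" using U finite_vecs finite_subset by (auto simp: Grass_def)
  then have "fv.dim (U \<union> V) \<le> fv.dim U + fv.dim W"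
    using assms(3,4) by (rule fv.dim_Un_le_if_subset_span)
  then show ?thesis
    using U V by (simp add: dI_def vdim_def Grass_def subsum_eq_span_Un)
qed

lemma systematic_vec_eq_diff:
  assumes u: "u \<in> vecs TYPE('a::field) n" "\<And>i. i \<in> S \<Longrightarrow> u i = unit_vec (enum S j) i"
    and S: "S \<subseteq> {..<n}" "j < card S"
    and a: "\<And>k. k < n - card S \<Longrightarrow> a k = u (enum ({..<n} - S) k)"
  shows "systematic_vec n S D j = u - embed_coords ({..<n} - S) (\<lambda>k. a k - D k j)"
proof -
  define T where "T = {..<n} - S"
  have "finite S" using S(1) finite_subset by blast
  then have "card T = n - card S"
    using S(1) by (simp add: T_def card_Diff_subset)
  have "enum S j \<in> S"
    using bij_betwE[OF bij_betw_enum[OF \<open>finite S\<close>]] S(2) by blast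
  have "(\<Sum>i\<in>S. fscale (u i) (unit_vec i)) = (\<Sum>i\<in>S. fscale (unit_vec (enum S j) i) (unit_vec i))"
    using u(2) by simp
  also have "\<dots> = unit_vec (enum S j)"
    using \<open>finite S\<close> \<open>enum S j \<in> S\<close> by (intro sum_unit_vec_expansion) (auto simp: unit_vec_def)
  finally have "u = unit_vec (enum S j) + embed_coords T (\<lambda>k. u (enum T k))"
    using vecs_decompose[OF u(1) S(1)] by (simp add: T_def)
  also have "embed_coords T (\<lambda>k. u (enum T k)) = embed_coords T a"
    using a \<open>card T = n - card S\<close> by (intro embed_coords_cong) (simp add: T_def)
  also have "\<dots> = embed_coords T (\<lambda>k. D k j) + embed_coords T (\<lambda>k. a k - D k j)"
  proof -
    have "(\<lambda>k. a k - D k j) = a - (\<lambda>k. D k j)"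
      by (simp add: fun_eq_iff)
    then have "embed_coords T (\<lambda>k. a k - D k j) = embed_coords T a - embed_coords T (\<lambda>k. D k j)"
      using module_hom.diff[OF linear_embed_coords[unfolded linear_iff_module_hom]] by metis
    then show ?thesis by simp
  qed
  finally show ?thesis
    unfolding systematic_vec_def T_def by (metis add.assoc add_diff_cancel)
qed

lemma dI_systematic_space_le_dR:
  fixes U :: "(nat \<Rightarrow> 'a::{finite,field}) set"
  assumes U: "U \<in> Grass TYPE('a) n r" and S: "S \<subseteq> {..<n}" "card S = r"
    and u: "\<And>j. j < r \<Longrightarrow> u j \<in> U" "\<And>j i. j < r \<Longrightarrow> i \<in> S \<Longrightarrow> u j i = unit_vec (enum S j) i"
    and A: "\<And>k j. k < n - r \<Longrightarrow> j < r \<Longrightarrow> A k j = u j (enum ({..<n} - S) k)"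
  shows "dI U (systematic_space n r S D) \<le> dR r A D"
proof -
  define X where "X = (\<lambda>j k. (A - D) k j) ` {..<r}"
  define W where "W = embed_coords ({..<n} - S) ` X"
  have "finite W" by (simp add: W_def X_def)
  have "fv.dim W \<le> fv.dim X"
    unfolding W_def by (rule fv.dim_linear_image_le[OF linear_embed_coords]) (simp add: X_def)
  also have "\<dots> = dR r A D"
    by (simp add: dR_def mrank_def vdim_def X_def)
  finally have dim_W: "fv.dim W \<le> dR r A D" .
  have "systematic_space n r S D \<subseteq> fv.span (U \<union> W)"
    unfolding systematic_space_def
  proof (intro fv.span_minimal fv.subspace_span image_subsetI)
    fix j assume j: "j \<in> {..<r}"
    have "systematic_vec n S D j = u j - embed_coords ({..<n} - S) (\<lambda>k. A k j - D k j)"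
      using u j U S A by (intro systematic_vec_eq_diff) (auto simp: Grass_def)
    moreover have "u j \<in> fv.span (U \<union> W)" "embed_coords ({..<n} - S) (\<lambda>k. A k j - D k j) \<in> fv.span (U \<union> W)"
      using u(1) j by (auto simp: W_def X_def intro: fv.span_base)
    ultimately show "systematic_vec n S D j \<in> fv.span (U \<union> W)"
      by (simp add: fv.span_diff)
  qed
  then have "dI U (systematic_space n r S D) \<le> fv.dim W"
    using dI_le_if_subset_span[OF U systematic_space_in_Grass[OF S] \<open>finite W\<close>] by blast
  with dim_W show ?thesis by simp
qed

lemma exists_close_systematic_space:
  fixes U :: "(nat \<Rightarrow> 'a::{finite,field}) set"
  assumes U: "U \<in> Grass TYPE('a) n r"
    and cover: "\<forall>M\<in>mats TYPE('a) (n - r) r. \<exists>D\<in>C. dR r M D \<le> \<rho>"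
  shows "\<exists>S D. S \<subseteq> {..<n} \<and> card S = r \<and> D \<in> C \<and> dI U (systematic_space n r S D) \<le> \<rho>"
proof -
  obtain S where S: "S \<subseteq> {..<n}" "card S = r"
    and info: "\<And>i. i \<in> S \<Longrightarrow> \<exists>x\<in>U. \<forall>j\<in>S. x j = unit_vec i j"
    using Grass_information_set[OF U] by blast
  have "finite S" using S(1) finite_subset by blast
  have "\<exists>x\<in>U. \<forall>i\<in>S. x i = unit_vec (enum S j) i" if "j < r" for j
    using info bij_betwE[OF bij_betw_enum[OF \<open>finite S\<close>]] that S(2) by blast
  then obtain u where u: "\<And>j. j < r \<Longrightarrow> u j \<in> U"
    "\<And>j i. j < r \<Longrightarrow> i \<in> S \<Longrightarrow> u j i = unit_vec (enum S j) i"
    by metis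
  define A :: "nat \<Rightarrow> nat \<Rightarrow> 'a" where
    "A = (\<lambda>k j. if k < n - r \<and> j < r then u j (enum ({..<n} - S) k) else 0)"
  have "A \<in> mats TYPE('a) (n - r) r" by (auto simp: A_def mats_def)
  then obtain D where D: "D \<in> C" "dR r A D \<le> \<rho>" using cover by blast
  have "dI U (systematic_space n r S D) \<le> dR r A D"
    using dI_systematic_space_le_dR[OF U S, of u A D] u by (simp add: A_def)
  then show ?thesis
    using S D by (intro exI[of _ S] exI[of _ D]) simp
qed

lemma dR_self: "dR N M M = 0"
proof -
  have "(\<lambda>j i. (M - M) i j) ` {..<N} \<subseteq> fv.span {}"
    by (auto simp: fv.span_empty fun_eq_iff)
  from fv.dim_le_card[OF this] show ?thesis by (simp add: dR_def mrank_def vdim_def)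
qed

lemma K_R_attained:
  "\<exists>C. C \<subseteq> mats T m N \<and> (\<forall>M\<in>mats T m N. \<exists>D\<in>C. dR N M D \<le> \<rho>) \<and> card C = K_R T m N \<rho>"
proof -
  let ?sizes = "{card C | C. C \<subseteq> mats T m N \<and> (\<forall>M\<in>mats T m N. \<exists>D\<in>C. dR N M D \<le> \<rho>)}"
  have "\<forall>M\<in>mats T m N. \<exists>D\<in>mats T m N. dR N M D \<le> \<rho>"
  proof
    fix M assume "M \<in> mats T m N"
    moreover have "dR N M M \<le> \<rho>" by (simp add: dR_self)
    ultimately show "\<exists>D\<in>mats T m N. dR N M D \<le> \<rho>" by blast
  qed
  then have "card (mats T m N) \<in> ?sizes"
    by blast
  then have "?sizes \<noteq> {}"
    by (rule ex_in_conv[THEN iffD1, OF exI])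
  then have "Inf ?sizes \<in> ?sizes"
    by (rule Inf_nat_def1)
  then show ?thesis
    unfolding K_R_def by auto
qed

lemma finite_mats: "finite (mats TYPE('a::{finite,field}) m N)"
proof -
  have "mats TYPE('a) m N \<subseteq> {f. \<forall>x. (x \<in> {..<m} \<longrightarrow> f x \<in> vecs TYPE('a) N) \<and> (x \<notin> {..<m} \<longrightarrow> f x = 0)}"
    by (auto simp: mats_def vecs_def fun_eq_iff)
  then show ?thesis
    using finite_set_of_finite_funs[of "{..<m}" "vecs TYPE('a) N" 0] finite_vecs
    by (meson finite_lessThan finite_subset)
qed

lemma K_C_le_card:
  assumes "C \<subseteq> Grass TYPE('a::{finite,field}) n r" "C \<noteq> {}" "finite C"
    and cover: "\<And>U. U \<in> Grass TYPE('a) n r \<Longrightarrow> \<exists>c\<in>C. dI U c \<le> \<rho>"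
  shows "K_C TYPE('a) n r \<rho> \<le> card C"
proof -
  have "Min ((\<lambda>c. dI U c) ` C) \<le> \<rho>" if "U \<in> Grass TYPE('a) n r" for U
    using cover[OF that] assms(2,3) by (subst Min_le_iff) auto
  moreover have "finite (Grass TYPE('a) n r)" "Grass TYPE('a) n r \<noteq> {}"
    using finite_Grass assms(1,2) by blast+
  ultimately have "covering_radius_sub TYPE('a) n r C \<le> \<rho>"
    by (simp add: covering_radius_sub_def Max_le_iff)
  then show ?thesis
    unfolding K_C_def using assms(1,2) by (intro cInf_lower) auto
qed

lemma K_C_le_card_systematic_code:
  assumes "r \<le> n" and CR: "CR \<subseteq> mats TYPE('a::{finite,field}) (n - r) r"
    "\<forall>M\<in>mats TYPE('a) (n - r) r. \<exists>D\<in>CR. dR r M D \<le> \<rho>"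
  shows "K_C TYPE('a) n r \<rho> \<le> card ((\<lambda>(S, D). systematic_space n r S D) ` ({S. S \<subseteq> {..<n} \<and> card S = r} \<times> CR))"
    (is "_ \<le> card ?Code")
proof (rule K_C_le_card)
  show "?Code \<subseteq> Grass TYPE('a) n r"
    by (auto simp: systematic_space_in_Grass)
  obtain D where "D \<in> CR"
    using CR(2) by (auto simp: mats_def)
  then have "({..<r}, D) \<in> {S. S \<subseteq> {..<n} \<and> card S = r} \<times> CR"
    using assms(1) by simp
  then show "?Code \<noteq> {}" by blast
  show "finite ?Code"
    using finite_subset[OF CR(1) finite_mats] by simp
  show "\<exists>c\<in>?Code. dI U c \<le> \<rho>" if U: "U \<in> Grass TYPE('a) n r" for U
  proof -
    obtain S D where "S \<subseteq> {..<n}" "card S = r" "D \<in> CR" "dI U (systematic_space n r S D) \<le> \<rho>"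
      using exists_close_systematic_space[OF U CR(2)] by blast
    then show ?thesis
      by (intro bexI[of _ "systematic_space n r S D"] image_eqI[of _ _ "(S, D)"]) auto
  qed
qed

theorem proposition12:
  fixes n r \<rho> :: nat
  assumes "r \<le> n div 2" and "0 < \<rho>" and "\<rho> < r"
  shows "K_C TYPE('a::{finite,field}) n r \<rho> \<le> (n choose r) * K_R TYPE('a) (n - r) r \<rho>"
proof -
  obtain CR where CR: "CR \<subseteq> mats TYPE('a) (n - r) r"
      "\<forall>M\<in>mats TYPE('a) (n - r) r. \<exists>D\<in>CR. dR r M D \<le> \<rho>" "card CR = K_R TYPE('a) (n - r) r \<rho>"
    using K_R_attained[of "TYPE('a)" "n - r" r \<rho>] by blast
  let ?Subs = "{S. S \<subseteq> {..<n} \<and> card S = r}"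
  have "finite (?Subs \<times> CR)"
    using finite_subset[OF CR(1) finite_mats] by simp
  have "K_C TYPE('a) n r \<rho> \<le> card ((\<lambda>(S, D). systematic_space n r S D) ` (?Subs \<times> CR))"
    using assms(1) CR(1,2) by (intro K_C_le_card_systematic_code) simp_all
  also have "\<dots> \<le> card ?Subs * card CR"
    using card_image_le[OF \<open>finite (?Subs \<times> CR)\<close>] by (simp add: card_cartesian_product)
  also have "card ?Subs = n choose r"
    using n_subsets[of "{..<n}" r] by simp
  finally show ?thesis using CR(3) by simp
qed

end
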